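(* Consider the protocol: for $t=1,\ldots,T$, the adversary reveals $\boldsymbol v_t\in\mathbb{R}^d$, the learner chooses $\boldsymbol w_t\in\mathbb{R}^d$ and predicts $\boldsymbol w_t^T\boldsymbol v_t$, the adversary reveals a loss $f_t(\boldsymbol w)=\ell_t(\boldsymbol w^T\boldsymbol v_t)$, and the learner suffers $\ell_t(\boldsymbol w_t^T\boldsymbol v_t)$. Let $B>0$ and $\mathcal{K}=\{\boldsymbol w\in\mathbb{R}^d:\ |\boldsymbol w^T\boldsymbol v_t|\le B\ \forall t\in[T]\}$. Suppose the $f_t$ are $\alpha$-exp-concave and $G$-Lipschitz, and the $\ell_t$ are Lipschitz smooth. Running FLH with learning rate $\zeta=\alpha$ and base learners $E^j$ being instances of the invariant Online Newton Step algorithm of Luo, Agarwal, Cesa-Bianchi and Langford (2016) started at time $j$ yields, for every comparator sequence $\boldsymbol z_1,\ldots,\boldsymbol z_T\in\mathcal{K}$, $$\sum_{t=1}^T\big(f_t(\boldsymbol w_t)-f_t(\boldsymbol z_t)\big)=\tilde O\big(d\sqrt{TV_T}\vee d^2\big),$$ where $V_T=\sum_{t=2}^T\|\boldsymbol z_t-\boldsymbol z_{t-1}\|$ and $\tilde O$ hides dependence on $G,\alpha$ and polylogarithmic factors of $T$.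
   Context: $f$ is $\alpha$-exp-concave if $f(\boldsymbol y)\ge f(\boldsymbol x)+(\boldsymbol y-\boldsymbol x)^T\nabla f(\boldsymbol x)+\frac\alpha2((\boldsymbol y-\boldsymbol x)^T\nabla f(\boldsymbol x))^2$; $G$-Lipschitz means $|f(\boldsymbol x)-f(\boldsymbol y)|\le G\|\boldsymbol x-\boldsymbol y\|$ (Euclidean norm). $a\vee b=\max\{a,b\}$. FLH with learning rate $\zeta$ and base learners $E^1,\ldots,E^T$: maintain a probability vector $v_t\in\mathbb{R}^t$ with $v_1^{(1)}=1$; at round $t$ let $x_t^{(j)}$ be the prediction of $E^j$ for $j\le t$ and play $x_t=\sum_{j=1}^t v_t^{(j)}x_t^{(j)}$; after observing $f_t$ set $\hat v_{t+1}^{(i)}=v_t^{(i)}e^{-\zeta f_t(x_t^{(i)})}/\sum_{j=1}^t v_t^{(j)}e^{-\zeta f_t(x_t^{(j)})}$ for $i\le t$, then $v_{t+1}^{(t+1)}=1/(t+1)$ and $v_{t+1}^{(i)}=(1-(t+1)^{-1})\hat v_{t+1}^{(i)}$ for $i\le t$. The invariant ONS base learner has static regret $O(d^2\log T)$ against $\mathcal{K}$ under these assumptions. *)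

theory Defs
  imports "HOL-Analysis.Analysis"
begin

text \<open>Vectors in R^d are represented as functions nat => real; only the
coordinates 0..d-1 are relevant.\<close>

definition dotd :: "nat \<Rightarrow> (nat \<Rightarrow> real) \<Rightarrow> (nat \<Rightarrow> real) \<Rightarrow> real" where
  "dotd d x y = (\<Sum>i<d. x i * y i)"

definition normd :: "nat \<Rightarrow> (nat \<Rightarrow> real) \<Rightarrow> real" where
  "normd d x = sqrt (\<Sum>i<d. (x i)\<^sup>2)"

definition exp_concave_on ::
  "nat \<Rightarrow> (nat \<Rightarrow> real) set \<Rightarrow> real \<Rightarrow> ((nat \<Rightarrow> real) \<Rightarrow> real)
     \<Rightarrow> ((nat \<Rightarrow> real) \<Rightarrow> (nat \<Rightarrow> real)) \<Rightarrow> bool" where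
  "exp_concave_on d S \<alpha> f gf \<longleftrightarrow>
     (\<forall>x\<in>S. \<forall>y\<in>S. f y \<ge> f x + dotd d (\<lambda>i. y i - x i) (gf x)
                        + \<alpha> / 2 * (dotd d (\<lambda>i. y i - x i) (gf x))\<^sup>2)"

definition lipschitz_on_d ::
  "nat \<Rightarrow> (nat \<Rightarrow> real) set \<Rightarrow> real \<Rightarrow> ((nat \<Rightarrow> real) \<Rightarrow> real) \<Rightarrow> bool" where
  "lipschitz_on_d d S G f \<longleftrightarrow>
     (\<forall>x\<in>S. \<forall>y\<in>S. \<bar>f x - f y\<bar> \<le> G * normd d (\<lambda>i. x i - y i))"

text \<open>FLH weights: flh_w zeta f x t j is v_t^(j) (rounds t >= 1, experts 1..t),
where f t is the loss of round t and x j t the prediction of expert E^j at round t.\<close>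
fun flh_w :: "real \<Rightarrow> (nat \<Rightarrow> 'a \<Rightarrow> real) \<Rightarrow> (nat \<Rightarrow> nat \<Rightarrow> 'a) \<Rightarrow> nat \<Rightarrow> nat \<Rightarrow> real" where
  "flh_w \<zeta> f x 0 = (\<lambda>i. 0)"
| "flh_w \<zeta> f x (Suc 0) = (\<lambda>i. if i = 1 then 1 else 0)"
| "flh_w \<zeta> f x (Suc (Suc t)) =
     (let w = flh_w \<zeta> f x (Suc t);
          Z = (\<Sum>j=1..Suc t. w j * exp (- \<zeta> * f (Suc t) (x j (Suc t))))
      in (\<lambda>i. if 1 \<le> i \<and> i \<le> Suc t
               then (1 - 1 / real (Suc (Suc t))) * (w i * exp (- \<zeta> * f (Suc t) (x i (Suc t))) / Z)
               else if i = Suc (Suc t) then 1 / real (Suc (Suc t)) else 0))"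

definition flh_play ::
  "real \<Rightarrow> (nat \<Rightarrow> (nat \<Rightarrow> real) \<Rightarrow> real) \<Rightarrow> (nat \<Rightarrow> nat \<Rightarrow> (nat \<Rightarrow> real)) \<Rightarrow> nat \<Rightarrow> (nat \<Rightarrow> real)" where
  "flh_play \<zeta> f x t = (\<lambda>k. \<Sum>j=1..t. flh_w \<zeta> f x t j * x j t k)"

end

theory Submission
  imports Defs
begin

text \<open>Along \<open>v\<^sub>t\<close>, the exp-concavity inequality and the Lipschitz derivative of \<open>\<ell>\<^sub>t\<close>
  make \<open>exp (- \<alpha> \<ell>\<^sub>t)\<close> concave: \<open>\<ell>\<^sub>t' exp (- \<alpha> \<ell>\<^sub>t)\<close> can decrease over an interval only
  by a quadratically small amount, hence not at all. So the FLH mixture does not lose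
  against the exponential-weights potential, and the standard potential argument bounds
  the regret of FLH on any interval \<open>[a, b]\<close> against the expert started at \<open>a\<close> by
  \<open>ln T / \<alpha>\<close>. That expert is within \<open>c d\<^sup>2 (1 + ln T)\<close> of the fixed point \<open>z\<^sub>a\<close>, which is
  within \<open>G\<close> times the path length of the moving comparator. Cutting \<open>[1, T]\<close> into blocks
  of length \<open>l\<close> bounds the dynamic regret by \<open>(T / l + 1) A + l G V\<^sub>T\<close> with
  \<open>A \<approx> d\<^sup>2 ln T\<close>; balancing \<open>l\<close>, or using the per-round bound \<open>1 / (2 \<alpha>)\<close> when no
  \<open>l \<ge> 1\<close> helps, gives \<open>O(d \<surd>(T V\<^sub>T) \<or> d\<^sup>2)\<close> up to logarithmic factors.\<close>

section \<open>Weights of Follow-the-Leading-History\<close>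

lemma flh_w_update:
  assumes "t \<ge> 1" "1 \<le> i" "i \<le> t"
  shows "flh_w \<zeta> f x (Suc t) i = (1 - 1 / real (Suc t)) *
           (flh_w \<zeta> f x t i * exp (- \<zeta> * f t (x i t)) /
            (\<Sum>j=1..t. flh_w \<zeta> f x t j * exp (- \<zeta> * f t (x j t))))"
proof -
  obtain t0 where "t = Suc t0" using assms(1) by (cases t) auto
  then show ?thesis using assms by (simp add: Let_def)
qed

lemma flh_w_new_expert:
  assumes "t \<ge> 1"
  shows "flh_w \<zeta> f x t t = 1 / real t"
proof -
  consider "t = Suc 0" | t0 where "t = Suc (Suc t0)"
    using assms by (cases t; cases "t - 1") auto
  then show ?thesis by cases (auto simp: Let_def)
qed

lemma flh_w_pos:
  assumes "j \<in> {1..t}"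
  shows "flh_w \<zeta> f x t j > 0"
  using assms
proof (induction t arbitrary: j)
  case 0
  then show ?case by simp
next
  case (Suc t)
  show ?case
  proof (cases "j = Suc t")
    case True
    then show ?thesis using flh_w_new_expert[of "Suc t" \<zeta> f x] by simp
  next
    case False
    with Suc.prems have j: "1 \<le> j" "j \<le> t" by auto
    define Z where "Z = (\<Sum>i=1..t. flh_w \<zeta> f x t i * exp (- \<zeta> * f t (x i t)))"
    have "Z > 0" unfolding Z_def using j by (intro sum_pos mult_pos_pos Suc.IH) auto
    have "1 - 1 / real (Suc t) > 0" using j by simp
    then have "(1 - 1 / real (Suc t)) * (flh_w \<zeta> f x t j * exp (- \<zeta> * f t (x j t)) / Z) > 0"
      using \<open>Z > 0\<close> Suc.IH[of j] j by simp
    then show ?thesis using flh_w_update[of t j \<zeta> f x] j by (simp add: Z_def)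
  qed
qed

lemma flh_w_sum:
  assumes "t \<ge> 1"
  shows "(\<Sum>j=1..t. flh_w \<zeta> f x t j) = 1"
proof (cases "t = 1")
  case True
  then show ?thesis by simp
next
  case False
  with assms obtain s where t: "t = Suc s" and s: "s \<ge> 1" by (cases t) auto
  define Z where "Z = (\<Sum>j=1..s. flh_w \<zeta> f x s j * exp (- \<zeta> * f s (x j s)))"
  have "Z > 0" unfolding Z_def using s by (intro sum_pos mult_pos_pos flh_w_pos) auto
  have "(\<Sum>j=1..s. flh_w \<zeta> f x t j)
        = (\<Sum>j=1..s. (1 - 1 / real t) * (flh_w \<zeta> f x s j * exp (- \<zeta> * f s (x j s)) / Z))"
    unfolding t Z_def using s by (intro sum.cong refl flh_w_update) auto
  also have "\<dots> = (1 - 1 / real t) * (Z / Z)"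
    unfolding Z_def sum_divide_distrib[symmetric] sum_distrib_left[symmetric] ..
  also have "\<dots> = 1 - 1 / real t" using \<open>Z > 0\<close> by (simp add: Z_def)
  finally show ?thesis using flh_w_new_expert[OF assms] by (simp add: t)
qed

lemma flh_w_le_1:
  assumes "j \<in> {1..t}"
  shows "flh_w \<zeta> f x t j \<le> 1"
proof -
  have "flh_w \<zeta> f x t j \<le> (\<Sum>i=1..t. flh_w \<zeta> f x t i)"
    using assms by (intro member_le_sum) (auto intro!: less_imp_le[OF flh_w_pos])
  then show ?thesis using assms flh_w_sum[of t \<zeta> f x] by simp
qed

text \<open>Here \<open>l t\<close> is the learner's loss in round \<open>t\<close>; \<open>mix\<close> is the mixture
  inequality that exp-concavity provides.\<close>

lemma flh_ln_weight_lower_bound: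
  assumes mix: "\<And>t. t \<in> {1..T} \<Longrightarrow>
      (\<Sum>j=1..t. flh_w \<zeta> f x t j * exp (- \<zeta> * f t (x j t))) \<le> exp (- \<zeta> * l t)"
    and j: "1 \<le> j" and "j \<le> r" "r \<le> Suc T"
  shows "\<zeta> * (\<Sum>s\<in>{j..<r}. l s - f s (x j s)) \<le> ln (flh_w \<zeta> f x r j) + ln (real r)"
  using assms(3-)
proof (induction r rule: dec_induct)
  case base
  then show ?case using flh_w_new_expert[OF j, of \<zeta> f x] j by (simp add: ln_div)
next
  case (step t)
  have t: "t \<ge> 1" "t \<in> {1..T}" using step j by auto
  define Z where "Z = (\<Sum>i=1..t. flh_w \<zeta> f x t i * exp (- \<zeta> * f t (x i t)))"
  have "Z > 0" unfolding Z_def using t by (intro sum_pos mult_pos_pos flh_w_pos) auto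
  have "ln Z \<le> - \<zeta> * l t"
    using mix[OF t(2)] \<open>Z > 0\<close> unfolding Z_def by (simp add: ln_le_cancel_iff[symmetric])
  have w: "flh_w \<zeta> f x t j > 0" using step.hyps(1) j by (auto intro: flh_w_pos)
  have "flh_w \<zeta> f x (Suc t) j
        = real t / real (Suc t) * (flh_w \<zeta> f x t j * exp (- \<zeta> * f t (x j t)) / Z)"
    using flh_w_update[OF t(1) j step.hyps(1)] by (simp add: Z_def field_simps)
  then have "ln (flh_w \<zeta> f x (Suc t) j)
      = ln (real t) - ln (real (Suc t)) + ln (flh_w \<zeta> f x t j) - \<zeta> * f t (x j t) - ln Z"
    using t w \<open>Z > 0\<close> by (simp add: ln_mult ln_div)
  then show ?case
    using step.IH step.prems \<open>ln Z \<le> - \<zeta> * l t\<close> step.hyps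
    by (simp add: distrib_left algebra_simps)
qed

lemma flh_interval_regret:
  assumes mix: "\<And>t. t \<in> {1..T} \<Longrightarrow>
      (\<Sum>j=1..t. flh_w \<zeta> f x t j * exp (- \<zeta> * f t (x j t))) \<le> exp (- \<zeta> * l t)"
    and "1 \<le> j" "j \<le> r" "r \<le> T"
  shows "\<zeta> * (\<Sum>t=j..r. l t - f t (x j t)) \<le> ln (real r + 1)"
proof -
  have "\<zeta> * (\<Sum>t\<in>{j..<Suc r}. l t - f t (x j t)) \<le> ln (flh_w \<zeta> f x (Suc r) j) + ln (real (Suc r))"
    using assms by (intro flh_ln_weight_lower_bound[where T = T]) auto
  moreover have "ln (flh_w \<zeta> f x (Suc r) j) \<le> 0"
    using assms flh_w_pos[of j "Suc r" \<zeta> f x] flh_w_le_1[of j "Suc r" \<zeta> f x] by simp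
  moreover have "{j..<Suc r} = {j..r}" by auto
  ultimately show ?thesis by (simp add: add.commute)
qed

section \<open>Exp-concavity in one dimension\<close>

lemma add_half_mult_square_ge:
  fixes \<alpha> a :: real
  assumes "\<alpha> > 0"
  shows "a + \<alpha> / 2 * a\<^sup>2 \<ge> - 1 / (2 * \<alpha>)"
proof -
  have "a + \<alpha> / 2 * a\<^sup>2 + 1 / (2 * \<alpha>) = (\<alpha> * a + 1)\<^sup>2 / (2 * \<alpha>)"
    using assms by (simp add: field_simps power2_eq_square)
  also have "\<dots> \<ge> 0" using assms by simp
  finally show ?thesis by linarith
qed

text \<open>Chaining the bound along a partition of \<open>[s, s']\<close> into \<open>n\<close> pieces gives
  \<open>g s' - g s \<ge> - K (s' - s)\<^sup>2 / n\<close> for every \<open>n\<close>.\<close>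

lemma mono_on_if_increments_ge_neg_square:
  fixes g :: "real \<Rightarrow> real"
  assumes "K \<ge> 0"
    and incr: "\<And>s s'. a \<le> s \<Longrightarrow> s \<le> s' \<Longrightarrow> s' \<le> b \<Longrightarrow> g s' - g s \<ge> - K * (s' - s)\<^sup>2"
  shows "mono_on {a..b} g"
proof (rule mono_onI, rule ccontr)
  fix s s' assume s: "s \<in> {a..b}" "s' \<in> {a..b}" "s \<le> s'" and gap: "\<not> g s \<le> g s'"
  define \<Delta> where "\<Delta> = s' - s"
  obtain n :: nat where n: "real n > K * \<Delta>\<^sup>2 / (g s - g s')"
    using reals_Archimedean2 by blast
  have "K * \<Delta>\<^sup>2 / (g s - g s') \<ge> 0" using \<open>K \<ge> 0\<close> gap by simp
  with n have "n \<ge> 1" by (cases n) auto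
  define p where "p k = s + real k * \<Delta> / real n" for k
  have p_range: "a \<le> p k \<and> p k \<le> b" if "k \<le> n" for k
  proof -
    have "real k * \<Delta> \<le> real n * \<Delta>"
      using that s by (intro mult_right_mono) (auto simp: \<Delta>_def)
    then have "real k * \<Delta> / real n \<le> \<Delta>"
      using \<open>n \<ge> 1\<close> by (simp add: divide_le_eq mult.commute)
    moreover have "real k * \<Delta> / real n \<ge> 0" using s by (simp add: \<Delta>_def)
    ultimately show ?thesis using s \<Delta>_def unfolding p_def atLeastAtMost_iff by linarith
  qed
  have p_step: "p (Suc k) - p k = \<Delta> / real n" for k
    by (simp add: p_def distrib_right add_divide_distrib)
  have "\<Delta> / real n \<ge> 0" using s by (simp add: \<Delta>_def)
  have "g s' - g s = (\<Sum>k<n. g (p (Suc k)) - g (p k))"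
    using sum_lessThan_telescope[of "\<lambda>k. g (p k)" n] \<open>n \<ge> 1\<close> by (simp add: p_def \<Delta>_def)
  also have "\<dots> \<ge> (\<Sum>k<n. - K * (\<Delta> / real n)\<^sup>2)"
  proof (rule sum_mono)
    fix k assume "k \<in> {..<n}"
    then show "g (p (Suc k)) - g (p k) \<ge> - K * (\<Delta> / real n)\<^sup>2"
      using incr[of "p k" "p (Suc k)"] p_range[of k] p_range[of "Suc k"] p_step[of k]
        \<open>\<Delta> / real n \<ge> 0\<close> by simp
  qed
  finally have "real n * (g s - g s') \<le> K * \<Delta>\<^sup>2"
    using \<open>n \<ge> 1\<close> by (simp add: power_divide power2_eq_square field_simps)
  moreover have "real n * (g s - g s') > K * \<Delta>\<^sup>2" using n gap by (simp add: field_simps)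
  ultimately show False by simp
qed

text \<open>Here \<open>p\<close>, \<open>q\<close> are the slopes at the endpoints of an interval of length
  \<open>\<Delta>\<close> and \<open>D\<close> is the increment over it; the two hypotheses are the exp-concavity
  inequality read from either endpoint.\<close>

lemma exp_concave_slope_gap:
  fixes \<alpha> \<Delta> D p q :: real
  assumes "\<alpha> > 0" "\<Delta> > 0" "q \<ge> 0"
    and left: "D \<ge> p * \<Delta> + \<alpha> / 2 * (p * \<Delta>)\<^sup>2"
    and right: "D \<le> q * \<Delta> - \<alpha> / 2 * (q * \<Delta>)\<^sup>2"
  shows "q * exp (- \<alpha> * D) - p \<ge> \<alpha> / 2 * (p\<^sup>2 - q\<^sup>2) * \<Delta>"
proof -
  have "(p + \<alpha> / 2 * (p\<^sup>2 + q\<^sup>2) * \<Delta>) * \<Delta> = p * \<Delta> + \<alpha> / 2 * (p * \<Delta>)\<^sup>2 + \<alpha> / 2 * (q * \<Delta>)\<^sup>2"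
    by (simp add: power2_eq_square algebra_simps)
  also have "\<dots> \<le> q * \<Delta>" using left right by linarith
  finally have pq: "q - p \<ge> \<alpha> / 2 * (p\<^sup>2 + q\<^sup>2) * \<Delta>"
    using \<open>\<Delta> > 0\<close> by (simp add: mult_le_cancel_right_pos)
  have "q * exp (- \<alpha> * D) \<ge> q * (1 - \<alpha> * D)"
    using exp_ge_add_one_self[of "- \<alpha> * D"] \<open>q \<ge> 0\<close> by (intro mult_left_mono) auto
  also have "q * (1 - \<alpha> * D) \<ge> q * (1 - \<alpha> * (q * \<Delta> - \<alpha> / 2 * (q * \<Delta>)\<^sup>2))"
    using right \<open>\<alpha> > 0\<close> \<open>q \<ge> 0\<close> by (intro mult_left_mono) auto
  also have "q * (1 - \<alpha> * (q * \<Delta> - \<alpha> / 2 * (q * \<Delta>)\<^sup>2)) \<ge> q - \<alpha> * q\<^sup>2 * \<Delta>"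
  proof -
    have "q * (\<alpha> * (\<alpha> / 2 * (q * \<Delta>)\<^sup>2)) \<ge> 0" using \<open>q \<ge> 0\<close> \<open>\<alpha> > 0\<close> by simp
    then show ?thesis by (simp add: algebra_simps power2_eq_square)
  qed
  finally show ?thesis using pq by (simp add: algebra_simps power2_eq_square)
qed

lemma abs_square_diff_le:
  fixes p q :: real
  assumes "\<bar>p\<bar> \<le> M" "\<bar>q\<bar> \<le> M"
  shows "\<bar>p\<^sup>2 - q\<^sup>2\<bar> \<le> 2 * M * \<bar>p - q\<bar>"
proof -
  have "\<bar>p\<^sup>2 - q\<^sup>2\<bar> = \<bar>p - q\<bar> * \<bar>p + q\<bar>"
    by (simp add: power2_eq_square abs_mult[symmetric] algebra_simps)
  also have "\<dots> \<le> \<bar>p - q\<bar> * (2 * M)"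
    using assms by (intro mult_left_mono) auto
  finally show ?thesis by (simp add: mult_ac)
qed

lemma mult_ge_neg_bound:
  fixes e H X Y :: real
  assumes "0 < e" "e \<le> H" "Y \<ge> 0" "X \<ge> - Y"
  shows "e * X \<ge> - (H * Y)"
proof -
  have "e * X \<ge> e * - Y" using assms by (intro mult_left_mono) auto
  moreover have "e * - Y \<ge> H * - Y" using assms by (intro mult_right_mono_neg) auto
  ultimately show ?thesis by simp
qed

lemma exp_weighted_slope_increment_ge:
  fixes \<phi> \<phi>' :: "real \<Rightarrow> real"
  assumes "\<alpha> > 0" "L \<ge> 0" "s \<le> s'"
    and left: "\<phi> s' \<ge> \<phi> s + \<phi>' s * (s' - s) + \<alpha> / 2 * (\<phi>' s * (s' - s))\<^sup>2"
    and right: "\<phi> s \<ge> \<phi> s' + \<phi>' s' * (s - s') + \<alpha> / 2 * (\<phi>' s' * (s - s'))\<^sup>2"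
    and lip: "\<bar>\<phi>' s' - \<phi>' s\<bar> \<le> L * (s' - s)"
    and slope: "\<bar>\<phi>' s\<bar> \<le> M" "\<bar>\<phi>' s'\<bar> \<le> M"
    and height: "exp (- \<alpha> * \<phi> s) \<le> H" "exp (- \<alpha> * \<phi> s') \<le> H"
  shows "\<phi>' s' * exp (- \<alpha> * \<phi> s') - \<phi>' s * exp (- \<alpha> * \<phi> s) \<ge> - (H * \<alpha> * L * M) * (s' - s)\<^sup>2"
proof (cases "s = s'")
  case True
  then show ?thesis by simp
next
  case False
  define \<Delta> p q D where "\<Delta> = s' - s" and "p = \<phi>' s" and "q = \<phi>' s'" and "D = \<phi> s' - \<phi> s"
  have "\<Delta> > 0" using False \<open>s \<le> s'\<close> by (simp add: \<Delta>_def)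
  have left': "D \<ge> p * \<Delta> + \<alpha> / 2 * (p * \<Delta>)\<^sup>2"
    using left by (simp add: D_def p_def \<Delta>_def)
  have right': "D \<le> q * \<Delta> - \<alpha> / 2 * (q * \<Delta>)\<^sup>2"
    using right by (simp add: D_def q_def \<Delta>_def power2_eq_square algebra_simps)
  have "\<bar>p - q\<bar> \<le> L * \<Delta>" "M \<ge> 0"
    using lip slope by (simp_all add: p_def q_def \<Delta>_def abs_minus_commute)
  have "\<bar>p\<^sup>2 - q\<^sup>2\<bar> \<le> 2 * M * \<bar>p - q\<bar>"
    using abs_square_diff_le slope by (simp add: p_def q_def)
  also have "\<dots> \<le> 2 * M * (L * \<Delta>)"
    using \<open>\<bar>p - q\<bar> \<le> L * \<Delta>\<close> \<open>M \<ge> 0\<close> by (intro mult_left_mono) auto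
  finally have sq_diff: "\<bar>p\<^sup>2 - q\<^sup>2\<bar> \<le> 2 * M * (L * \<Delta>)" .
  have "\<bar>\<alpha> / 2 * (p\<^sup>2 - q\<^sup>2) * \<Delta>\<bar> = \<alpha> / 2 * \<Delta> * \<bar>p\<^sup>2 - q\<^sup>2\<bar>"
    using \<open>\<alpha> > 0\<close> \<open>\<Delta> > 0\<close> by (simp add: abs_mult)
  also have "\<dots> \<le> \<alpha> / 2 * \<Delta> * (2 * M * (L * \<Delta>))"
    using sq_diff \<open>\<alpha> > 0\<close> \<open>\<Delta> > 0\<close> by (intro mult_left_mono) auto
  also have "\<dots> = \<alpha> * L * M * \<Delta>\<^sup>2"
    by (simp add: power2_eq_square algebra_simps)
  finally have sq_gap: "\<bar>\<alpha> / 2 * (p\<^sup>2 - q\<^sup>2) * \<Delta>\<bar> \<le> \<alpha> * L * M * \<Delta>\<^sup>2" .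
  have "\<alpha> * L * M * \<Delta>\<^sup>2 \<ge> 0" using \<open>\<alpha> > 0\<close> \<open>L \<ge> 0\<close> \<open>M \<ge> 0\<close> by simp
  show ?thesis
  proof (cases "q \<ge> 0")
    case True
    have "q * exp (- \<alpha> * D) - p \<ge> \<alpha> / 2 * (p\<^sup>2 - q\<^sup>2) * \<Delta>"
      using exp_concave_slope_gap[OF \<open>\<alpha> > 0\<close> \<open>\<Delta> > 0\<close> True left' right'] .
    then have "exp (- \<alpha> * \<phi> s) * (q * exp (- \<alpha> * D) - p) \<ge> - (H * (\<alpha> * L * M * \<Delta>\<^sup>2))"
      using abs_le_D2[OF sq_gap] \<open>\<alpha> * L * M * \<Delta>\<^sup>2 \<ge> 0\<close> by (intro mult_ge_neg_bound height) auto
    then show ?thesis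
      by (simp add: p_def q_def D_def \<Delta>_def algebra_simps flip: exp_add)
  next
    case False
    text \<open>Mirror image of the first case: swap the endpoints and negate the slopes.\<close>
    have "\<alpha> / 2 * (p * \<Delta>)\<^sup>2 \<ge> 0" "\<alpha> / 2 * (q * \<Delta>)\<^sup>2 \<ge> 0" using \<open>\<alpha> > 0\<close> by simp_all
    then have "p * \<Delta> \<le> q * \<Delta>" using left' right' by linarith
    then have "- p \<ge> 0" using False \<open>\<Delta> > 0\<close> by simp
    moreover have "- D \<ge> - q * \<Delta> + \<alpha> / 2 * (- q * \<Delta>)\<^sup>2" "- D \<le> - p * \<Delta> - \<alpha> / 2 * (- p * \<Delta>)\<^sup>2"
      using left' right' by (simp_all add: power2_eq_square)
    ultimately have "- p * exp (- \<alpha> * - D) - - q \<ge> \<alpha> / 2 * ((- q)\<^sup>2 - (- p)\<^sup>2) * \<Delta>"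
      using exp_concave_slope_gap[OF \<open>\<alpha> > 0\<close> \<open>\<Delta> > 0\<close>] by blast
    then have "exp (- \<alpha> * \<phi> s') * (q - p * exp (\<alpha> * D)) \<ge> - (H * (\<alpha> * L * M * \<Delta>\<^sup>2))"
      using abs_le_D1[OF sq_gap] \<open>\<alpha> * L * M * \<Delta>\<^sup>2 \<ge> 0\<close>
      by (intro mult_ge_neg_bound height) (auto simp: algebra_simps)
    then show ?thesis
      by (simp add: p_def q_def D_def \<Delta>_def algebra_simps flip: exp_add)
  qed
qed

lemma exp_concave_1d_convex_on_neg_exp:
  fixes \<phi> \<phi>' :: "real \<Rightarrow> real"
  assumes "\<alpha> > 0" "L \<ge> 0" "B \<ge> 0"
    and deriv: "\<And>s. (\<phi> has_real_derivative \<phi>' s) (at s)"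
    and lip: "\<And>s r. \<bar>\<phi>' s - \<phi>' r\<bar> \<le> L * \<bar>s - r\<bar>"
    and exp_concave: "\<And>s s'. s \<in> {-B..B} \<Longrightarrow> s' \<in> {-B..B} \<Longrightarrow>
                  \<phi> s' \<ge> \<phi> s + \<phi>' s * (s' - s) + \<alpha> / 2 * (\<phi>' s * (s' - s))\<^sup>2"
  shows "convex_on {-B..B} (\<lambda>s. - exp (- \<alpha> * \<phi> s))"
proof -
  define M where "M = \<bar>\<phi>' 0\<bar> + L * B"
  define H where "H = exp (- \<alpha> * \<phi> 0 + 1 / 2)"
  have slope: "\<bar>\<phi>' s\<bar> \<le> M" if "s \<in> {-B..B}" for s
  proof -
    have "\<bar>\<phi>' s - \<phi>' 0\<bar> \<le> L * \<bar>s\<bar>" using lip[of s 0] by simp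
    moreover have "L * \<bar>s\<bar> \<le> L * B" using that \<open>L \<ge> 0\<close> by (intro mult_left_mono) auto
    ultimately show ?thesis unfolding M_def by simp
  qed
  have height: "exp (- \<alpha> * \<phi> s) \<le> H" if "s \<in> {-B..B}" for s
  proof -
    have "\<phi> s \<ge> \<phi> 0 + \<phi>' 0 * s + \<alpha> / 2 * (\<phi>' 0 * s)\<^sup>2"
      using exp_concave[of 0 s] that \<open>B \<ge> 0\<close> by simp
    then have "\<phi> s \<ge> \<phi> 0 - 1 / (2 * \<alpha>)"
      using add_half_mult_square_ge[OF \<open>\<alpha> > 0\<close>, of "\<phi>' 0 * s"] by linarith
    then have "- \<alpha> * \<phi> s \<le> - \<alpha> * \<phi> 0 + 1 / 2"
      using \<open>\<alpha> > 0\<close> by (simp add: field_simps)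
    then show ?thesis unfolding H_def by simp
  qed
  have "mono_on {-B..B} (\<lambda>s. \<phi>' s * exp (- \<alpha> * \<phi> s))"
  proof (rule mono_on_if_increments_ge_neg_square)
    show "H * \<alpha> * L * M \<ge> 0"
      using \<open>\<alpha> > 0\<close> \<open>L \<ge> 0\<close> slope[of 0] \<open>B \<ge> 0\<close> by (simp add: H_def)
    fix s s' assume "- B \<le> s" "s \<le> s'" "s' \<le> B"
    then have "s \<in> {-B..B}" "s' \<in> {-B..B}" by auto
    then show "\<phi>' s' * exp (- \<alpha> * \<phi> s') - \<phi>' s * exp (- \<alpha> * \<phi> s) \<ge> - (H * \<alpha> * L * M) * (s' - s)\<^sup>2"
      using \<open>s \<le> s'\<close> lip[of s' s]
      by (intro exp_weighted_slope_increment_ge \<open>\<alpha> > 0\<close> \<open>L \<ge> 0\<close> exp_concave slope height) auto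
  qed
  show ?thesis
  proof (rule convex_on_realI[where f' = "\<lambda>s. \<alpha> * (\<phi>' s * exp (- \<alpha> * \<phi> s))"])
    show "\<alpha> * (\<phi>' s * exp (- \<alpha> * \<phi> s)) \<le> \<alpha> * (\<phi>' s' * exp (- \<alpha> * \<phi> s'))"
      if "s \<in> {-B..B}" "s' \<in> {-B..B}" "s \<le> s'" for s s'
      using mono_onD[OF \<open>mono_on _ _\<close> that] \<open>\<alpha> > 0\<close> by simp
    show "((\<lambda>s. - exp (- \<alpha> * \<phi> s)) has_real_derivative \<alpha> * (\<phi>' s * exp (- \<alpha> * \<phi> s))) (at s)" for s
      by (rule derivative_eq_intros deriv refl | simp)+
  qed simp
qed

section \<open>Single-index losses\<close>

lemma dotd_sum_left: "dotd d (\<lambda>k. \<Sum>j\<in>J. w j * x j k) y = (\<Sum>j\<in>J. w j * dotd d (x j) y)"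
  unfolding dotd_def by (simp add: sum_distrib_left sum_distrib_right mult.assoc sum.swap[of _ J])

lemma dotd_scale_left: "dotd d (\<lambda>i. a * x i) y = a * dotd d x y"
  unfolding dotd_def by (simp add: sum_distrib_left mult.assoc)

lemma dotd_scale_right: "dotd d x (\<lambda>i. a * y i) = a * dotd d x y"
  unfolding dotd_def by (simp add: sum_distrib_left mult.left_commute)

lemma dotd_eq_0_if_dotd_self_eq_0:
  assumes "dotd d v v = 0"
  shows "dotd d x v = 0"
proof -
  have "\<forall>i\<in>{..<d}. v i * v i = 0"
    using assms unfolding dotd_def by (subst sum_nonneg_eq_0_iff[symmetric]) auto
  then show ?thesis unfolding dotd_def by simp
qed

lemma dotd_convex_combination_bound:
  assumes "finite J" "\<And>j. j \<in> J \<Longrightarrow> w j \<ge> 0" "sum w J = 1"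
    and "\<And>j. j \<in> J \<Longrightarrow> \<bar>dotd d (x j) v\<bar> \<le> B"
  shows "\<bar>dotd d (\<lambda>k. \<Sum>j\<in>J. w j * x j k) v\<bar> \<le> B"
proof -
  have "dotd d (x j) v \<in> {-B..B}" if "j \<in> J" for j
    using assms(4)[OF that] by (simp add: abs_le_iff)
  then have "(\<Sum>j\<in>J. w j *\<^sub>R dotd d (x j) v) \<in> {-B..B}"
    using assms(1-3) by (intro convex_sum) auto
  then show ?thesis by (auto simp: dotd_sum_left)
qed

lemma exp_concave_on_loss_gap:
  assumes "\<alpha> > 0" "exp_concave_on d S \<alpha> f gf" "x \<in> S" "y \<in> S"
  shows "f x - f y \<le> 1 / (2 * \<alpha>)"
  using assms add_half_mult_square_ge[OF \<open>\<alpha> > 0\<close>, of "dotd d (\<lambda>i. y i - x i) (gf x)"]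
  unfolding exp_concave_on_def by fastforce

lemma exp_concave_single_index_1d:
  assumes ec: "exp_concave_on d {w. \<bar>dotd d w v\<bar> \<le> B} \<alpha>
                 (\<lambda>w. lo (dotd d w v)) (\<lambda>w i. dl (dotd d w v) * v i)"
    and "dotd d v v > 0" "s \<in> {-B..B}" "s' \<in> {-B..B}"
  shows "lo s' \<ge> lo s + dl s * (s' - s) + \<alpha> / 2 * (dl s * (s' - s))\<^sup>2"
proof -
  define nv where "nv = dotd d v v"
  define u u' where "u = (\<lambda>i. s / nv * v i)" and "u' = (\<lambda>i. s' / nv * v i)"
  have du: "dotd d u v = s" and du': "dotd d u' v = s'"
    unfolding u_def u'_def dotd_scale_left using \<open>dotd d v v > 0\<close> by (simp_all add: nv_def)
  have diff: "(\<lambda>i. u' i - u i) = (\<lambda>i. (s' - s) / nv * v i)"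
    by (auto simp: u_def u'_def diff_divide_distrib left_diff_distrib)
  have step: "dotd d (\<lambda>i. u' i - u i) (\<lambda>i. dl (dotd d u v) * v i) = dl s * (s' - s)"
    unfolding diff du dotd_scale_left dotd_scale_right using \<open>dotd d v v > 0\<close> by (simp add: nv_def)
  have "u \<in> {w. \<bar>dotd d w v\<bar> \<le> B}" "u' \<in> {w. \<bar>dotd d w v\<bar> \<le> B}"
    using du du' assms(3,4) by auto
  then have "lo (dotd d u' v) \<ge> lo (dotd d u v) + dotd d (\<lambda>i. u' i - u i) (\<lambda>i. dl (dotd d u v) * v i)
      + \<alpha> / 2 * (dotd d (\<lambda>i. u' i - u i) (\<lambda>i. dl (dotd d u v) * v i))\<^sup>2"
    using ec unfolding exp_concave_on_def by blast
  then show ?thesis unfolding step unfolding du du' .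
qed

lemma single_index_exp_mixture:
  assumes "\<alpha> > 0" "L \<ge> 0" "B \<ge> 0"
    and deriv: "\<And>s. (lo has_real_derivative dl s) (at s)"
    and lip: "\<And>s r. \<bar>dl s - dl r\<bar> \<le> L * \<bar>s - r\<bar>"
    and ec: "exp_concave_on d {w. \<bar>dotd d w v\<bar> \<le> B} \<alpha>
               (\<lambda>w. lo (dotd d w v)) (\<lambda>w i. dl (dotd d w v) * v i)"
    and J: "finite J" "\<And>j. j \<in> J \<Longrightarrow> w j \<ge> 0" "sum w J = 1"
    and x: "\<And>j. j \<in> J \<Longrightarrow> \<bar>dotd d (x j) v\<bar> \<le> B"
  shows "(\<Sum>j\<in>J. w j * exp (- \<alpha> * lo (dotd d (x j) v)))
           \<le> exp (- \<alpha> * lo (dotd d (\<lambda>k. \<Sum>j\<in>J. w j * x j k) v))"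
proof (cases "dotd d v v = 0")
  case True
  then show ?thesis
    using J by (simp add: dotd_eq_0_if_dotd_self_eq_0 sum_distrib_right[symmetric])
next
  case False
  then have "dotd d v v > 0" by (simp add: dotd_def sum_nonneg order_le_neq_trans)
  have "convex_on {-B..B} (\<lambda>s. - exp (- \<alpha> * lo s))"
    using exp_concave_single_index_1d[OF ec \<open>dotd d v v > 0\<close>]
    by (intro exp_concave_1d_convex_on_neg_exp[OF \<open>\<alpha> > 0\<close> \<open>L \<ge> 0\<close> \<open>B \<ge> 0\<close> deriv lip])
  moreover have "J \<noteq> {}" using J by auto
  moreover have "dotd d (x j) v \<in> {-B..B}" if "j \<in> J" for j
    using x[OF that] by (simp add: abs_le_iff)
  ultimately have "- exp (- \<alpha> * lo (\<Sum>j\<in>J. w j *\<^sub>R dotd d (x j) v))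
      \<le> (\<Sum>j\<in>J. w j * - exp (- \<alpha> * lo (dotd d (x j) v)))"
    using J by (intro convex_on_sum) auto
  then show ?thesis by (simp add: dotd_sum_left sum_negf)
qed

section \<open>Path length and blocking\<close>

lemma normd_nonneg: "normd d x \<ge> 0"
  by (simp add: normd_def sum_nonneg)

lemma normd_diff_commute: "normd d (\<lambda>i. x i - y i) = normd d (\<lambda>i. y i - x i)"
  unfolding normd_def by (simp add: power2_commute)

lemma normd_diff_triangle:
  "normd d (\<lambda>i. x i - z i) \<le> normd d (\<lambda>i. x i - y i) + normd d (\<lambda>i. y i - z i)"
  using L2_set_triangle_ineq[of "\<lambda>i. x i - y i" "\<lambda>i. y i - z i" "{..<d}"]
  by (simp add: normd_def L2_set_def)

definition path_length :: "nat \<Rightarrow> (nat \<Rightarrow> nat \<Rightarrow> real) \<Rightarrow> nat \<Rightarrow> nat \<Rightarrow> real" where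
  "path_length d z a b = (\<Sum>t\<in>{a<..b}. normd d (\<lambda>i. z t i - z (t - 1) i))"

lemma path_length_nonneg: "path_length d z a b \<ge> 0"
  unfolding path_length_def by (simp add: sum_nonneg normd_nonneg)

lemma path_length_split:
  assumes "a \<le> m" "m \<le> b"
  shows "path_length d z a b = path_length d z a m + path_length d z m b"
proof -
  have "{a<..b} = {a<..m} \<union> {m<..b}" using assms by auto
  then show ?thesis unfolding path_length_def by (simp add: sum.union_disjoint ivl_disj_int)
qed

lemma path_length_Suc_le: "path_length d z (Suc a) b \<le> path_length d z a b"
  unfolding path_length_def by (rule sum_mono2) (auto simp: normd_nonneg)

lemma path_length_mono: "b \<le> b' \<Longrightarrow> path_length d z a b \<le> path_length d z a b'"
  unfolding path_length_def by (rule sum_mono2) (auto simp: normd_nonneg)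

lemma normd_diff_le_path_length:
  assumes "a \<le> t"
  shows "normd d (\<lambda>i. z a i - z t i) \<le> path_length d z a t"
  using assms
proof (induction t rule: dec_induct)
  case base
  then show ?case by (simp add: normd_def path_length_def)
next
  case (step t)
  have "normd d (\<lambda>i. z t i - z (Suc t) i) = normd d (\<lambda>i. z (Suc t) i - z t i)"
    by (rule normd_diff_commute)
  then have "normd d (\<lambda>i. z a i - z (Suc t) i)
      \<le> normd d (\<lambda>i. z a i - z t i) + normd d (\<lambda>i. z (Suc t) i - z t i)"
    using normd_diff_triangle[of d "z a" "z (Suc t)" "z t"] by linarith
  also have "\<dots> = normd d (\<lambda>i. z a i - z t i) + path_length d z t (Suc t)"
  proof -
    have "{t<..Suc t} = {Suc t}" by auto
    then show ?thesis by (simp add: path_length_def)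
  qed
  also have "\<dots> \<le> path_length d z a t + path_length d z t (Suc t)"
    using step.IH by simp
  also have "\<dots> = path_length d z a (Suc t)"
    using step.hyps by (intro path_length_split[symmetric]) auto
  finally show ?case .
qed

lemma sum_le_by_blocks:
  fixes r :: "nat \<Rightarrow> real" and W :: "nat \<Rightarrow> nat \<Rightarrow> real"
  assumes "A \<ge> 0" "l \<ge> 1"
    and W_nonneg: "\<And>a b. W a b \<ge> 0"
    and W_split: "\<And>a m b. a \<le> m \<Longrightarrow> m < b \<Longrightarrow> W a m + W (Suc m) b \<le> W a b"
    and block: "\<And>a b. 1 \<le> a \<Longrightarrow> a \<le> b \<Longrightarrow> b \<le> N \<Longrightarrow>
                  sum r {a..b} \<le> A + real (Suc b - a) * W a b"
  shows "sum r {1..N} \<le> (real N / real l + 1) * A + real l * W 1 N"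
  using block
proof (induction N rule: less_induct)
  case (less N)
  show ?case
  proof (cases "N \<le> l")
    case True
    have "sum r {1..N} \<le> A + real N * W 1 N"
      using less.prems[of 1 N] \<open>A \<ge> 0\<close> W_nonneg[of 1 N] by (cases "N = 0") auto
    also have "\<dots> \<le> (real N / real l + 1) * A + real l * W 1 N"
      using True \<open>A \<ge> 0\<close> W_nonneg[of 1 N]
      by (intro add_mono mult_right_mono) (auto simp: algebra_simps)
    finally show ?thesis .
  next
    case False
    define m where "m = N - l"
    have m: "1 \<le> m" "m < N" "N = m + l" using False \<open>l \<ge> 1\<close> by (auto simp: m_def)
    have IH: "sum r {1..m} \<le> (real m / real l + 1) * A + real l * W 1 m"
      using less.prems m by (intro less.IH[OF \<open>m < N\<close>]) auto
    have "sum r {1..N} = sum r {1..m} + sum r {Suc m..N}"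
      using m sum.ub_add_nat[of 1 m r l] by simp
    also have "\<dots> \<le> ((real m / real l + 1) * A + real l * W 1 m) + (A + real l * W (Suc m) N)"
      using IH less.prems[of "Suc m" N] m by (intro add_mono) auto
    also have "\<dots> \<le> (real N / real l + 1) * A + real l * W 1 N"
    proof -
      have "(real m / real l + 1) * A + A = (real N / real l + 1) * A"
        using m \<open>l \<ge> 1\<close> by (simp add: field_simps)
      moreover have "real l * W 1 m + real l * W (Suc m) N \<le> real l * W 1 N"
        using W_split[of 1 m N] m by (simp flip: distrib_left)
      ultimately show ?thesis by linarith
    qed
    finally show ?thesis .
  qed
qed

lemma block_length_sqrt_choice:
  fixes total A U :: real and T :: nat
  assumes "A > 0" "U > 0" "real T * A \<ge> U"
    and blocks: "\<And>l. l \<ge> 1 \<Longrightarrow> total \<le> (real T / real l + 1) * A + real l * U"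
  shows "total \<le> A + 3 * sqrt (real T * A * U)"
proof -
  define x where "x = sqrt (real T * A / U)"
  have "x \<ge> 1" using assms by (simp add: x_def)
  have x2: "x\<^sup>2 = real T * A / U" using assms by (simp add: x_def)
  have xU: "x * U = sqrt (real T * A * U)"
  proof (rule real_sqrt_unique[symmetric])
    show "(x * U)\<^sup>2 = real T * A * U"
      using x2 \<open>U > 0\<close> by (simp add: power_mult_distrib field_simps power2_eq_square)
  qed (use \<open>x \<ge> 1\<close> \<open>U > 0\<close> in simp)
  have TAx: "real T * A / x = x * U"
    using x2 \<open>U > 0\<close> \<open>x \<ge> 1\<close> by (simp add: field_simps power2_eq_square)
  define l where "l = nat \<lfloor>x\<rfloor>"
  have "1 \<le> \<lfloor>x\<rfloor>" using \<open>x \<ge> 1\<close> by simp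
  then have "l \<ge> 1" and l: "real l = real_of_int \<lfloor>x\<rfloor>"
    by (simp_all add: l_def del: one_le_floor)
  with \<open>1 \<le> \<lfloor>x\<rfloor>\<close> have "real l \<le> x" "x \<le> 2 * real l"
    using real_of_int_floor_add_one_gt[of x] by (simp_all del: one_le_floor) linarith
  have "total \<le> (real T / real l + 1) * A + real l * U" using blocks[OF \<open>l \<ge> 1\<close>] .
  also have "\<dots> \<le> (2 * real T / x + 1) * A + x * U"
  proof (intro add_mono mult_right_mono)
    have "real T / real l = 2 * real T / (2 * real l)" by simp
    also have "\<dots> \<le> 2 * real T / x"
      using \<open>x \<le> 2 * real l\<close> \<open>x \<ge> 1\<close> by (intro divide_left_mono) auto
    finally show "real T / real l \<le> 2 * real T / x" .
  qed (use \<open>real l \<le> x\<close> \<open>A > 0\<close> \<open>U > 0\<close> in auto)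
  also have "\<dots> = 2 * (real T * A / x) + A + x * U"
    by (simp add: algebra_simps)
  also have "\<dots> = A + 3 * sqrt (real T * A * U)"
    using TAx xU by simp
  finally show ?thesis .
qed

text \<open>When \<open>T A < U\<close>, i.e. \<open>\<surd>(T A / U) < 1\<close>, no block length helps and the
  per-round bound \<open>b\<close> is used instead.\<close>

lemma block_length_balancing:
  fixes total A U b :: real and T :: nat
  assumes "A > 0" "U \<ge> 0" "b \<ge> 0" "T \<ge> 1"
    and blocks: "\<And>l. l \<ge> 1 \<Longrightarrow> total \<le> (real T / real l + 1) * A + real l * U"
    and per_round: "total \<le> real T * b"
  shows "total \<le> 3 * A + 3 * sqrt (real T * A * U) + b * sqrt (real T * U / A)"
proof -
  have nonneg: "0 \<le> sqrt (real T * A * U)" "0 \<le> b * sqrt (real T * U / A)"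
    using assms by simp_all
  consider "U = 0" | "U > 0" "real T * A < U" | "U > 0" "real T * A \<ge> U"
    using \<open>U \<ge> 0\<close> by linarith
  then show ?thesis
  proof cases
    case 1
    then have "total \<le> 2 * A" using blocks[OF \<open>T \<ge> 1\<close>] \<open>T \<ge> 1\<close> by simp
    then show ?thesis using nonneg \<open>A > 0\<close> by linarith
  next
    case 2
    then have "real T * A * real T \<le> U * real T" by (intro mult_right_mono) auto
    then have "(real T)\<^sup>2 \<le> real T * U / A"
      using \<open>A > 0\<close> by (simp add: field_simps power2_eq_square)
    then have "real T * b \<le> sqrt (real T * U / A) * b"
      using \<open>b \<ge> 0\<close> by (intro mult_right_mono real_le_rsqrt)
    then have "total \<le> b * sqrt (real T * U / A)" using per_round by (simp add: mult.commute)
    then show ?thesis using nonneg \<open>A > 0\<close> by linarith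
  next
    case 3
    then show ?thesis using block_length_sqrt_choice[OF \<open>A > 0\<close> _ _ blocks] nonneg \<open>A > 0\<close> by force
  qed
qed

lemma sqrt_block_term_le:
  fixes \<beta> G \<Lambda> d T V :: real
  assumes "\<beta> > 0" "G \<ge> 0" "\<Lambda> \<ge> 1" "T \<ge> 0" "V \<ge> 0" "d \<ge> 0"
  shows "sqrt (T * (\<beta> * \<Lambda> * d\<^sup>2) * (G * V)) \<le> sqrt (\<beta> * G) * \<Lambda> * (d * sqrt (T * V))"
proof (rule real_le_lsqrt)
  have "T * (\<beta> * \<Lambda> * d\<^sup>2) * (G * V) = (\<beta> * G * d\<^sup>2 * T * V) * \<Lambda>"
    by (simp add: algebra_simps)
  also have "\<dots> \<le> (\<beta> * G * d\<^sup>2 * T * V) * \<Lambda>\<^sup>2"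
    using assms by (intro mult_left_mono) (auto simp: power2_eq_square)
  also have "\<dots> = (sqrt (\<beta> * G) * \<Lambda> * (d * sqrt (T * V)))\<^sup>2"
    using assms by (simp add: power_mult_distrib)
  finally show "T * (\<beta> * \<Lambda> * d\<^sup>2) * (G * V) \<le> (sqrt (\<beta> * G) * \<Lambda> * (d * sqrt (T * V)))\<^sup>2" .
qed (use assms in simp)

lemma sqrt_per_round_term_le:
  fixes \<beta> G \<Lambda> d T V :: real
  assumes "\<beta> > 0" "G \<ge> 0" "\<Lambda> \<ge> 1" "T \<ge> 0" "V \<ge> 0" "d \<ge> 1"
  shows "sqrt (T * (G * V) / (\<beta> * \<Lambda> * d\<^sup>2)) \<le> sqrt (G / \<beta>) * sqrt (T * V)"
proof -
  have "1 \<le> \<Lambda> * d\<^sup>2"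
    using mult_mono[of 1 \<Lambda> 1 "d\<^sup>2"] one_le_power[of d 2] assms by simp
  then have "\<beta> \<le> \<beta> * \<Lambda> * d\<^sup>2"
    using mult_left_mono[of 1 "\<Lambda> * d\<^sup>2" \<beta>] assms by (simp add: mult.assoc)
  then have "T * (G * V) / (\<beta> * \<Lambda> * d\<^sup>2) \<le> T * (G * V) / \<beta>"
    using assms by (intro divide_left_mono) auto
  also have "\<dots> = (G / \<beta>) * (T * V)" by simp
  finally show ?thesis by (simp add: real_sqrt_mult[symmetric])
qed

lemma balanced_bound_le_max:
  fixes \<beta> G \<Lambda> d T V b :: real
  assumes "\<beta> > 0" "G \<ge> 0" "\<Lambda> \<ge> 1" "d \<ge> 1" "T \<ge> 0" "V \<ge> 0" "b \<ge> 0"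
  defines "A \<equiv> \<beta> * \<Lambda> * d\<^sup>2"
  shows "3 * A + 3 * sqrt (T * A * (G * V)) + b * sqrt (T * (G * V) / A)
           \<le> (3 * \<beta> + 3 * sqrt (\<beta> * G) + b * sqrt (G / \<beta>)) * \<Lambda> * max (d * sqrt (T * V)) (d\<^sup>2)"
proof -
  define M where "M = max (d * sqrt (T * V)) (d\<^sup>2)"
  have "M \<ge> d\<^sup>2" "M \<ge> d * sqrt (T * V)" by (simp_all add: M_def)
  have "sqrt (T * V) \<le> d * sqrt (T * V)"
    using assms mult_right_mono[of 1 d "sqrt (T * V)"] by simp
  also have "\<dots> \<le> M" by fact
  also have "\<dots> \<le> \<Lambda> * M"
    using mult_right_mono[of 1 \<Lambda> M] \<open>M \<ge> d\<^sup>2\<close> zero_le_power2[of d] assms by linarith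
  finally have "sqrt (T * V) \<le> \<Lambda> * M" .
  have "3 * A \<le> 3 * \<beta> * \<Lambda> * M"
    using \<open>M \<ge> d\<^sup>2\<close> assms by (simp add: A_def)
  moreover have "sqrt (T * A * (G * V)) \<le> sqrt (\<beta> * G) * \<Lambda> * M"
    using sqrt_block_term_le[of \<beta> G \<Lambda> T V d] \<open>M \<ge> d * sqrt (T * V)\<close> assms
      mult_left_mono[of "d * sqrt (T * V)" M "sqrt (\<beta> * G) * \<Lambda>"]
    by (simp add: A_def)
  moreover have "b * sqrt (T * (G * V) / A) \<le> b * (sqrt (G / \<beta>) * sqrt (T * V))"
    using sqrt_per_round_term_le[of \<beta> G \<Lambda> T V d] assms unfolding A_def by (intro mult_left_mono) auto
  moreover have "\<dots> \<le> b * (sqrt (G / \<beta>) * (\<Lambda> * M))"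
    using \<open>sqrt (T * V) \<le> \<Lambda> * M\<close> assms by (intro mult_left_mono) auto
  ultimately show ?thesis unfolding M_def[symmetric] by (simp add: algebra_simps)
qed

section \<open>Dynamic regret\<close>

lemma ln_Suc_le_1_plus_ln:
  assumes "b \<le> T" "1 \<le> b"
  shows "ln (real b + 1) \<le> 1 + ln (real T)"
proof -
  have "ln (real b + 1) \<le> ln (2 * real T)" using assms by simp
  also have "\<dots> = ln 2 + ln (real T)" using assms by (simp add: ln_mult)
  finally show ?thesis using ln_2_less_1 by linarith
qed

lemma path_length_1_eq: "path_length d z 1 T = (\<Sum>t=2..T. normd d (\<lambda>i. z t i - z (t - 1) i))"
proof -
  have "{1<..T} = {2..T}" by auto
  then show ?thesis by (simp add: path_length_def)
qed

locale single_index_flh =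
  fixes d T :: nat and B L \<alpha> G c :: real
    and v :: "nat \<Rightarrow> nat \<Rightarrow> real" and lo dl :: "nat \<Rightarrow> real \<Rightarrow> real"
    and f :: "nat \<Rightarrow> (nat \<Rightarrow> real) \<Rightarrow> real"
    and E :: "nat \<Rightarrow> nat \<Rightarrow> nat \<Rightarrow> real" and z :: "nat \<Rightarrow> nat \<Rightarrow> real"
  assumes f_def: "f = (\<lambda>t w. lo t (dotd d w (v t)))"
    and pos: "\<alpha> > 0" "G > 0" "c > 0" "d \<ge> 1" "T \<ge> 1" "B > 0" "L \<ge> 0"
    and deriv: "\<forall>t\<in>{1..T}. \<forall>s. (lo t has_real_derivative dl t s) (at s)"
    and lip_deriv: "\<forall>t\<in>{1..T}. \<forall>s r. \<bar>dl t s - dl t r\<bar> \<le> L * \<bar>s - r\<bar>"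
    and exp_concave: "\<forall>t\<in>{1..T}. exp_concave_on d {w. \<bar>dotd d w (v t)\<bar> \<le> B} \<alpha> (f t)
                        (\<lambda>w i. dl t (dotd d w (v t)) * v t i)"
    and lipschitz: "\<forall>t\<in>{1..T}. lipschitz_on_d d {w. \<bar>dotd d w (v t)\<bar> \<le> B} G (f t)"
    and experts_in: "\<forall>j\<in>{1..T}. \<forall>t\<in>{j..T}. E j t \<in> {w. \<bar>dotd d w (v t)\<bar> \<le> B}"
    and experts_regret: "\<forall>j r u. 1 \<le> j \<and> j \<le> r \<and> r \<le> T \<and>
                           u \<in> {w. \<forall>t\<in>{1..T}. \<bar>dotd d w (v t)\<bar> \<le> B} \<longrightarrow>
                           (\<Sum>t=j..r. f t (E j t) - f t u) \<le> c * real d ^ 2 * (1 + ln (real T))"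
    and comparators_in: "\<forall>t\<in>{1..T}. z t \<in> {w. \<forall>t\<in>{1..T}. \<bar>dotd d w (v t)\<bar> \<le> B}"
begin

abbreviation play :: "nat \<Rightarrow> nat \<Rightarrow> real" where
  "play \<equiv> flh_play \<alpha> f E"

lemma play_in_slab:
  assumes "t \<in> {1..T}"
  shows "\<bar>dotd d (play t) (v t)\<bar> \<le> B"
  unfolding flh_play_def
proof (rule dotd_convex_combination_bound)
  show "\<bar>dotd d (E j t) (v t)\<bar> \<le> B" if "j \<in> {1..t}" for j
    using experts_in assms that by auto
qed (use assms flh_w_sum in \<open>auto intro!: less_imp_le[OF flh_w_pos]\<close>)

lemma mixture:
  assumes "t \<in> {1..T}"
  shows "(\<Sum>j=1..t. flh_w \<alpha> f E t j * exp (- \<alpha> * f t (E j t))) \<le> exp (- \<alpha> * f t (play t))"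
  unfolding f_def flh_play_def
proof (rule single_index_exp_mixture[where L = L and B = B])
  show "exp_concave_on d {w. \<bar>dotd d w (v t)\<bar> \<le> B} \<alpha> (\<lambda>w. lo t (dotd d w (v t)))
          (\<lambda>w i. dl t (dotd d w (v t)) * v t i)"
    using exp_concave assms by (simp add: f_def)
  show "\<bar>dotd d (E j t) (v t)\<bar> \<le> B" if "j \<in> {1..t}" for j
    using experts_in assms that by auto
qed (use pos deriv lip_deriv assms flh_w_sum in \<open>auto intro!: less_imp_le[OF flh_w_pos]\<close>)

lemma interval_regret:
  assumes "1 \<le> j" "j \<le> r" "r \<le> T"
  shows "\<alpha> * (\<Sum>t=j..r. f t (play t) - f t (E j t)) \<le> ln (real r + 1)"
  using flh_interval_regret[OF mixture assms] by simp

lemma block_regret: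
  assumes "1 \<le> a" "a \<le> b" "b \<le> T"
  shows "(\<Sum>t=a..b. f t (play t) - f t (z t))
           \<le> (1 / \<alpha> + c) * (1 + ln (real T)) * (real d)\<^sup>2 + real (Suc b - a) * (G * path_length d z a b)"
proof -
  define \<Lambda> where "\<Lambda> = 1 + ln (real T)"
  have "\<Lambda> \<ge> 1" using pos by (simp add: \<Lambda>_def)
  have "z a \<in> {w. \<forall>t\<in>{1..T}. \<bar>dotd d w (v t)\<bar> \<le> B}" using comparators_in assms by auto
  text \<open>FLH versus the expert started at \<open>a\<close>, that expert versus the fixed point
    \<open>z a\<close>, and \<open>z a\<close> versus the moving comparator.\<close>
  have "\<alpha> * (\<Sum>t=a..b. f t (play t) - f t (E a t)) \<le> \<Lambda>"
    using interval_regret[OF assms] ln_Suc_le_1_plus_ln[of b T] assms by (simp add: \<Lambda>_def)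
  then have flh: "(\<Sum>t=a..b. f t (play t) - f t (E a t)) \<le> \<Lambda> / \<alpha>"
    using pos by (simp add: field_simps)
  have expert: "(\<Sum>t=a..b. f t (E a t) - f t (z a)) \<le> c * real d ^ 2 * \<Lambda>"
    using experts_regret \<open>z a \<in> _\<close> assms by (simp add: \<Lambda>_def)
  have drift: "(\<Sum>t=a..b. f t (z a) - f t (z t)) \<le> (\<Sum>t=a..b. G * path_length d z a b)"
  proof (rule sum_mono)
    fix t assume t: "t \<in> {a..b}"
    then have "t \<in> {1..T}" "a \<in> {1..T}" using assms by auto
    then have "z a \<in> {w. \<bar>dotd d w (v t)\<bar> \<le> B}" "z t \<in> {w. \<bar>dotd d w (v t)\<bar> \<le> B}"
      using comparators_in by auto
    then have "\<bar>f t (z a) - f t (z t)\<bar> \<le> G * normd d (\<lambda>i. z a i - z t i)"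
      using lipschitz \<open>t \<in> {1..T}\<close> unfolding lipschitz_on_d_def by blast
    then have "f t (z a) - f t (z t) \<le> G * normd d (\<lambda>i. z a i - z t i)" by linarith
    also have "\<dots> \<le> G * path_length d z a b"
      using normd_diff_le_path_length[of a t d z] path_length_mono[of t b d z a] t pos
      by (intro mult_left_mono) auto
    finally show "f t (z a) - f t (z t) \<le> G * path_length d z a b" .
  qed
  have "\<Lambda> / \<alpha> + c * real d ^ 2 * \<Lambda> \<le> (1 / \<alpha> + c) * \<Lambda> * (real d)\<^sup>2"
  proof -
    have "\<Lambda> / \<alpha> * 1 \<le> \<Lambda> / \<alpha> * (real d)\<^sup>2"
      using pos \<open>\<Lambda> \<ge> 1\<close> by (intro mult_left_mono) auto
    then show ?thesis by (simp add: algebra_simps)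
  qed
  then show ?thesis
    using flh expert drift by (simp add: \<Lambda>_def sum_subtractf algebra_simps)
qed

lemma dynamic_regret:
  defines "\<beta> \<equiv> 1 / \<alpha> + c"
  shows "(\<Sum>t=1..T. f t (play t) - f t (z t))
           \<le> (3 * \<beta> + 3 * sqrt (\<beta> * G) + 1 / (2 * \<alpha>) * sqrt (G / \<beta>)) * (1 + ln (real T))
               * max (real d * sqrt (real T * path_length d z 1 T)) ((real d)\<^sup>2)"
proof -
  define A where "A = \<beta> * (1 + ln (real T)) * (real d)\<^sup>2"
  define U where "U = G * path_length d z 1 T"
  have "\<beta> > 0" using pos by (simp add: \<beta>_def add_pos_pos)
  have "1 + ln (real T) \<ge> 1" using pos by simp
  have "A > 0" using \<open>\<beta> > 0\<close> pos by (simp add: A_def add_pos_nonneg)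
  have "(\<Sum>t=1..T. f t (play t) - f t (z t)) \<le> 3 * A + 3 * sqrt (real T * A * U) + 1 / (2 * \<alpha>) * sqrt (real T * U / A)"
  proof (rule block_length_balancing)
    show "(\<Sum>t=1..T. f t (play t) - f t (z t)) \<le> (real T / real l + 1) * A + real l * U" if "l \<ge> 1" for l
      unfolding U_def
    proof (rule sum_le_by_blocks[OF _ that])
      show "G * path_length d z a m + G * path_length d z (Suc m) b \<le> G * path_length d z a b"
        if "a \<le> m" "m < b" for a m b
        using path_length_Suc_le[of d z m b] path_length_split[of a m b d z] that pos
        by (simp flip: distrib_left)
      show "sum (\<lambda>t. f t (play t) - f t (z t)) {a..b} \<le> A + real (Suc b - a) * (G * path_length d z a b)"
        if "1 \<le> a" "a \<le> b" "b \<le> T" for a b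
        using block_regret[OF that] by (simp add: A_def \<beta>_def)
    qed (use \<open>A > 0\<close> pos path_length_nonneg in auto)
    have "f t (play t) - f t (z t) \<le> 1 / (2 * \<alpha>)" if "t \<in> {1..T}" for t
      using exp_concave_on_loss_gap[OF pos(1)] exp_concave play_in_slab comparators_in that by blast
    then show "(\<Sum>t=1..T. f t (play t) - f t (z t)) \<le> real T * (1 / (2 * \<alpha>))"
      using sum_mono[of "{1..T}" "\<lambda>t. f t (play t) - f t (z t)" "\<lambda>_. 1 / (2 * \<alpha>)"] by simp
  qed (use \<open>A > 0\<close> pos path_length_nonneg in \<open>auto simp: U_def\<close>)
  also have "\<dots> \<le> (3 * \<beta> + 3 * sqrt (\<beta> * G) + 1 / (2 * \<alpha>) * sqrt (G / \<beta>)) * (1 + ln (real T))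
               * max (real d * sqrt (real T * path_length d z 1 T)) ((real d)\<^sup>2)"
    unfolding A_def U_def
    using \<open>\<beta> > 0\<close> \<open>1 + ln (real T) \<ge> 1\<close> pos path_length_nonneg
    by (intro balanced_bound_le_max) auto
  finally show ?thesis .
qed

end

theorem theorem10:
  fixes \<alpha> G c :: real
  assumes "\<alpha> > 0" and "G > 0" and "c > 0"
  shows "\<exists>C>0. \<exists>k::nat. \<forall>(d::nat) (T::nat) (B::real) (v::nat \<Rightarrow> nat \<Rightarrow> real)
            (lo::nat \<Rightarrow> real \<Rightarrow> real) (dl::nat \<Rightarrow> real \<Rightarrow> real) (L::real)
            (E::nat \<Rightarrow> nat \<Rightarrow> (nat \<Rightarrow> real)) (z::nat \<Rightarrow> (nat \<Rightarrow> real)).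
     let f = (\<lambda>t w. lo t (dotd d w (v t)));
         gf = (\<lambda>t w. (\<lambda>i. dl t (dotd d w (v t)) * v t i));
         Kt = (\<lambda>t. {w. \<bar>dotd d w (v t)\<bar> \<le> B});
         K = {w. \<forall>t\<in>{1..T}. \<bar>dotd d w (v t)\<bar> \<le> B};
         V = (\<Sum>t=2..T. normd d (\<lambda>i. z t i - z (t - 1) i))
     in (d \<ge> 1 \<and> T \<ge> 1 \<and> B > 0 \<and> L \<ge> 0
         \<and> (\<forall>t\<in>{1..T}. \<forall>s. (lo t has_real_derivative dl t s) (at s))
         \<and> (\<forall>t\<in>{1..T}. \<forall>s r. \<bar>dl t s - dl t r\<bar> \<le> L * \<bar>s - r\<bar>)
         \<and> (\<forall>t\<in>{1..T}. exp_concave_on d (Kt t) \<alpha> (f t) (gf t))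
         \<and> (\<forall>t\<in>{1..T}. lipschitz_on_d d (Kt t) G (f t))
         \<and> (\<forall>j\<in>{1..T}. \<forall>t\<in>{j..T}. E j t \<in> Kt t)
         \<and> (\<forall>j r u. 1 \<le> j \<and> j \<le> r \<and> r \<le> T \<and> u \<in> K \<longrightarrow>
               (\<Sum>t=j..r. f t (E j t) - f t u) \<le> c * real d ^ 2 * (1 + ln (real T)))
         \<and> (\<forall>t\<in>{1..T}. z t \<in> K))
        \<longrightarrow> (\<Sum>t=1..T. f t (flh_play \<alpha> f E t) - f t (z t))
              \<le> C * (1 + ln (real T)) ^ k * max (real d * sqrt (real T * V)) (real d ^ 2)"
proof -
  define \<beta> where "\<beta> = 1 / \<alpha> + c"
  define C where "C = 3 * \<beta> + 3 * sqrt (\<beta> * G) + 1 / (2 * \<alpha>) * sqrt (G / \<beta>)"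
  have "\<beta> > 0" using assms by (simp add: \<beta>_def add_pos_pos)
  then have "C > 0" using assms by (simp add: C_def add_pos_nonneg)
  show ?thesis
    unfolding Let_def
    apply (intro exI[of _ C] conjI[OF \<open>C > 0\<close>] exI[of _ "1::nat"] allI impI)
    subgoal premises hyps for d T B v lo dl L E z
    proof -
      interpret single_index_flh d T B L \<alpha> G c v lo dl "\<lambda>t w. lo t (dotd d w (v t))" E z
        using assms hyps by unfold_locales auto
      show ?thesis
        using dynamic_regret[unfolded path_length_1_eq] by (simp add: C_def \<beta>_def)
    qed
    done
qed

end
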